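(* Let $v\in\Sigma^*$, let $u$ be a $v$-minimal word and $i\in\mathrm{supp}(u)$. Then: (1) every element $g\in\mathcal{I}_i$ is $u$-representable (i.e. some word $u$-represents $g$); (2) if $w$ is a word that $u$-represents some $g\in\mathcal{I}_i\setminus\{0_i\}$, then $\mathrm{rk}(w)=\mathrm{Rnk}(\mathcal{I}_i)$; (3) if $x\in\Sigma^*$ satisfies $\theta_i(x)=0_i$ for some $i\in\mathrm{supp}(u)$, then $\theta_j(x)=0_j$ for all $j\in\mathrm{supp}(u)$.
   Context: Let $\mathcal{A}=\langle Q,\Sigma,\delta\rangle$ be a synchronizing automaton with $n$ states $q_1,\dots,q_n$; write $q\cdot u$ for the action of $u\in\Sigma^*$ and $\mathrm{rk}(u)=|Q\cdot u|$. Each word acts linearly on $\mathbb{C}Q$ by $q\mapsto q\cdot u$, preserving $w^\perp=\{x:\langle x,q_1+\dots+q_n\rangle=0\}$; let $\rho:\Sigma^*\to\mathbb{M}_{n-1}(\mathbb{C})$ be the induced representation, $\mathcal{R}$ the $\mathbb{C}$-algebra generated by $\rho(\Sigma^* )$, $\mathrm{Rad}(\mathcal{A})=\rho^{-1}(\mathrm{Rad}(\mathcal{R}))$. Write $\mathcal{R}/\mathrm{Rad}(\mathcal{R})\cong\prod_{i=1}^k\mathbb{M}_{n_i}(\mathbb{C})$ and let $\theta_i:\Sigma^*\to\mathbb{M}_{n_i}(\mathbb{C})$ be $\rho$ followed by the quotient map and the $i$-th projection; $0_i$ is the zero matrix. The monoid $\theta_i(\Sigma^* )$ has a unique $0$-minimal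 ideal $\mathcal{I}_i$; for $g\in\mathcal{I}_i\setminus\{0_i\}$ let $\mathrm{Rnk}_i(g)=\min\{\mathrm{rk}(u):\theta_i(u)=g\}$ and $\mathrm{Rnk}(\mathcal{I}_i)=\min\{\mathrm{Rnk}_i(g):g\in\mathcal{I}_i\setminus\{0_i\}\}$. The support of a word $z$ is $\mathrm{supp}(z)=\{i:\theta_i(z)\neq0_i\}$. For $v\in\Sigma^*$, a word $u\in\Sigma^*v\Sigma^*$ is $v$-minimal if $\mathrm{supp}(u)\neq\emptyset$ and there is no $z\in\Sigma^*v\Sigma^*$ with $\emptyset\neq\mathrm{supp}(z)\subsetneq\mathrm{supp}(u)$. For such $u$, $i\in\mathrm{supp}(u)$ and $g\in\mathcal{I}_i$, a word $w$ $u$-represents $g$ if $w\in\Sigma^*u\Sigma^*$, $\theta_i(w)=g$, and either $g=0_i$ or $\mathrm{rk}(w)$ is minimum among all words $w'\in\Sigma^*u\Sigma^*$ with $\theta_i(w')=g$. *)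

theory Defs
  imports Main "Jordan_Normal_Form.Matrix"
begin

text \<open>States are 0,...,n-1 (state q_(j+1) of the paper is j here); the alphabet is a
finite set Sig; words are lists over Sig; delta is the transition function.\<close>

definition act :: "(nat \<Rightarrow> 'a \<Rightarrow> nat) \<Rightarrow> nat \<Rightarrow> 'a list \<Rightarrow> nat" where
  "act delta q w = fold (\<lambda>a p. delta p a) w q"

definition is_automaton :: "nat \<Rightarrow> 'a set \<Rightarrow> (nat \<Rightarrow> 'a \<Rightarrow> nat) \<Rightarrow> bool" where
  "is_automaton n Sig delta \<longleftrightarrow> finite Sig \<and> (\<forall>q<n. \<forall>a\<in>Sig. delta q a < n)"

definition rk :: "nat \<Rightarrow> (nat \<Rightarrow> 'a \<Rightarrow> nat) \<Rightarrow> 'a list \<Rightarrow> nat" where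
  "rk n delta w = card ((\<lambda>q. act delta q w) ` {..<n})"

definition synchronizing :: "nat \<Rightarrow> 'a set \<Rightarrow> (nat \<Rightarrow> 'a \<Rightarrow> nat) \<Rightarrow> bool" where
  "synchronizing n Sig delta \<longleftrightarrow> (\<exists>w\<in>lists Sig. rk n delta w = 1)"

text \<open>Matrix of the action of w on w-perp, w.r.t. the basis b_j = e_j - e_(n-1), j < n-1,
using row vectors (x maps to x * rho w), so that rho (u @ v) = rho u * rho v.\<close>

definition rho :: "nat \<Rightarrow> (nat \<Rightarrow> 'a \<Rightarrow> nat) \<Rightarrow> 'a list \<Rightarrow> complex mat" where
  "rho n delta w = mat (n - 1) (n - 1)
     (\<lambda>(j, m). (if act delta j w = m then 1 else 0) - (if act delta (n - 1) w = m then 1 else 0))"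

inductive_set gen_alg :: "nat \<Rightarrow> 'a set \<Rightarrow> (nat \<Rightarrow> 'a \<Rightarrow> nat) \<Rightarrow> complex mat set"
  for n Sig delta where
  gen: "w \<in> lists Sig \<Longrightarrow> rho n delta w \<in> gen_alg n Sig delta"
| zero: "0\<^sub>m (n - 1) (n - 1) \<in> gen_alg n Sig delta"
| add: "x \<in> gen_alg n Sig delta \<Longrightarrow> y \<in> gen_alg n Sig delta \<Longrightarrow> x + y \<in> gen_alg n Sig delta"
| smult: "x \<in> gen_alg n Sig delta \<Longrightarrow> c \<cdot>\<^sub>m x \<in> gen_alg n Sig delta"
| mult: "x \<in> gen_alg n Sig delta \<Longrightarrow> y \<in> gen_alg n Sig delta \<Longrightarrow> x * y \<in> gen_alg n Sig delta"

definition left_ideal :: "complex mat set \<Rightarrow> nat \<Rightarrow> complex mat set \<Rightarrow> bool" where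
  "left_ideal RR m L \<longleftrightarrow> L \<subseteq> RR \<and> 0\<^sub>m m m \<in> L
     \<and> (\<forall>x\<in>L. \<forall>y\<in>L. x + y \<in> L) \<and> (\<forall>c. \<forall>x\<in>L. c \<cdot>\<^sub>m x \<in> L)
     \<and> (\<forall>r\<in>RR. \<forall>x\<in>L. r * x \<in> L)"

definition maximal_left_ideal :: "complex mat set \<Rightarrow> nat \<Rightarrow> complex mat set \<Rightarrow> bool" where
  "maximal_left_ideal RR m L \<longleftrightarrow> left_ideal RR m L \<and> L \<noteq> RR
     \<and> (\<forall>L'. left_ideal RR m L' \<and> L \<subseteq> L' \<longrightarrow> L' = L \<or> L' = RR)"

definition jac_rad :: "complex mat set \<Rightarrow> nat \<Rightarrow> complex mat set" where
  "jac_rad RR m = RR \<inter> \<Inter> {L. maximal_left_ideal RR m L}"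

text \<open>psi : R \<rightarrow> prod_(i<k) M_(d i)(C) is a surjective unital algebra homomorphism
with kernel Rad(R); the i-th component is psi x i (values for i \<ge> k are irrelevant).\<close>

definition wedderburn ::
  "complex mat set \<Rightarrow> nat \<Rightarrow> nat \<Rightarrow> (nat \<Rightarrow> nat) \<Rightarrow> (complex mat \<Rightarrow> nat \<Rightarrow> complex mat) \<Rightarrow> bool" where
  "wedderburn RR m k d psi \<longleftrightarrow>
     (\<forall>i<k. d i > 0)
   \<and> (\<forall>x\<in>RR. \<forall>i<k. psi x i \<in> carrier_mat (d i) (d i))
   \<and> (\<forall>x\<in>RR. \<forall>y\<in>RR. \<forall>i<k. psi (x + y) i = psi x i + psi y i)
   \<and> (\<forall>c. \<forall>x\<in>RR. \<forall>i<k. psi (c \<cdot>\<^sub>m x) i = c \<cdot>\<^sub>m psi x i)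
   \<and> (\<forall>x\<in>RR. \<forall>y\<in>RR. \<forall>i<k. psi (x * y) i = psi x i * psi y i)
   \<and> (\<forall>i<k. psi (1\<^sub>m m) i = 1\<^sub>m (d i))
   \<and> (\<forall>g. (\<forall>i<k. g i \<in> carrier_mat (d i) (d i)) \<longrightarrow> (\<exists>x\<in>RR. \<forall>i<k. psi x i = g i))
   \<and> (\<forall>x\<in>RR. (\<forall>i<k. psi x i = 0\<^sub>m (d i) (d i)) \<longleftrightarrow> x \<in> jac_rad RR m)"

definition theta :: "nat \<Rightarrow> (nat \<Rightarrow> 'a \<Rightarrow> nat) \<Rightarrow> (complex mat \<Rightarrow> nat \<Rightarrow> complex mat)
    \<Rightarrow> nat \<Rightarrow> 'a list \<Rightarrow> complex mat" where
  "theta n delta psi i w = psi (rho n delta w) i"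

definition monoid_ideal :: "complex mat set \<Rightarrow> complex mat set \<Rightarrow> bool" where
  "monoid_ideal S J \<longleftrightarrow> J \<subseteq> S \<and> J \<noteq> {} \<and> (\<forall>s\<in>S. \<forall>t\<in>S. \<forall>x\<in>J. s * x * t \<in> J)"

definition zero_minimal_ideal :: "complex mat set \<Rightarrow> complex mat \<Rightarrow> complex mat set \<Rightarrow> bool" where
  "zero_minimal_ideal S z J \<longleftrightarrow> monoid_ideal S J \<and> z \<in> J \<and> J \<noteq> {z}
     \<and> (\<forall>J'. monoid_ideal S J' \<and> J' \<subseteq> J \<longrightarrow> J' = {z} \<or> J' = J)"

definition Ideal_I :: "nat \<Rightarrow> 'a set \<Rightarrow> (nat \<Rightarrow> 'a \<Rightarrow> nat) \<Rightarrow> (nat \<Rightarrow> nat)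
    \<Rightarrow> (complex mat \<Rightarrow> nat \<Rightarrow> complex mat) \<Rightarrow> nat \<Rightarrow> complex mat set" where
  "Ideal_I n Sig delta d psi i =
     (THE J. zero_minimal_ideal (theta n delta psi i ` lists Sig) (0\<^sub>m (d i) (d i)) J)"

definition Rnk_i :: "nat \<Rightarrow> 'a set \<Rightarrow> (nat \<Rightarrow> 'a \<Rightarrow> nat)
    \<Rightarrow> (complex mat \<Rightarrow> nat \<Rightarrow> complex mat) \<Rightarrow> nat \<Rightarrow> complex mat \<Rightarrow> nat" where
  "Rnk_i n Sig delta psi i g = (LEAST r. \<exists>u\<in>lists Sig. theta n delta psi i u = g \<and> rk n delta u = r)"

definition Rnk_I :: "nat \<Rightarrow> 'a set \<Rightarrow> (nat \<Rightarrow> 'a \<Rightarrow> nat) \<Rightarrow> (nat \<Rightarrow> nat)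
    \<Rightarrow> (complex mat \<Rightarrow> nat \<Rightarrow> complex mat) \<Rightarrow> nat \<Rightarrow> nat" where
  "Rnk_I n Sig delta d psi i = (LEAST r. \<exists>g \<in> Ideal_I n Sig delta d psi i - {0\<^sub>m (d i) (d i)}.
       Rnk_i n Sig delta psi i g = r)"

definition supp :: "nat \<Rightarrow> (nat \<Rightarrow> 'a \<Rightarrow> nat) \<Rightarrow> nat \<Rightarrow> (nat \<Rightarrow> nat)
    \<Rightarrow> (complex mat \<Rightarrow> nat \<Rightarrow> complex mat) \<Rightarrow> 'a list \<Rightarrow> nat set" where
  "supp n delta k d psi z = {i. i < k \<and> theta n delta psi i z \<noteq> 0\<^sub>m (d i) (d i)}"

definition factor_lang :: "'a set \<Rightarrow> 'a list \<Rightarrow> 'a list set" where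
  "factor_lang Sig v = {x @ v @ y | x y. x \<in> lists Sig \<and> y \<in> lists Sig}"

definition v_minimal :: "nat \<Rightarrow> 'a set \<Rightarrow> (nat \<Rightarrow> 'a \<Rightarrow> nat) \<Rightarrow> nat \<Rightarrow> (nat \<Rightarrow> nat)
    \<Rightarrow> (complex mat \<Rightarrow> nat \<Rightarrow> complex mat) \<Rightarrow> 'a list \<Rightarrow> 'a list \<Rightarrow> bool" where
  "v_minimal n Sig delta k d psi v u \<longleftrightarrow> u \<in> factor_lang Sig v
     \<and> supp n delta k d psi u \<noteq> {}
     \<and> \<not> (\<exists>z\<in>factor_lang Sig v. supp n delta k d psi z \<noteq> {}
              \<and> supp n delta k d psi z \<subset> supp n delta k d psi u)"

definition u_represents :: "nat \<Rightarrow> 'a set \<Rightarrow> (nat \<Rightarrow> 'a \<Rightarrow> nat) \<Rightarrow> (nat \<Rightarrow> nat)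
    \<Rightarrow> (complex mat \<Rightarrow> nat \<Rightarrow> complex mat) \<Rightarrow> 'a list \<Rightarrow> nat \<Rightarrow> complex mat \<Rightarrow> 'a list \<Rightarrow> bool" where
  "u_represents n Sig delta d psi u i g w \<longleftrightarrow> w \<in> factor_lang Sig u
     \<and> theta n delta psi i w = g
     \<and> (g = 0\<^sub>m (d i) (d i) \<or>
        (\<forall>w'\<in>factor_lang Sig u. theta n delta psi i w' = g \<longrightarrow> rk n delta w \<le> rk n delta w'))"

end

(* Fix i with theta_i(u) <> 0. The matrices theta_i(w), w a word, form a finite monoid of
   d_i x d_i matrices containing 0 (the image of a synchronizing word), and this monoid is prime:
   if g, h <> 0 then g theta_i(a) h <> 0 for some word a, since the words span the full matrix
   algebra M_(d_i)(C), which is prime. In a finite prime monoid with zero the 0-minimal ideal I_i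
   is unique and lies inside every ideal that has a nonzero element. If theta_i(w) is a nonzero
   element of I_i, the words having u as a factor and rank at most rk(w) form such an ideal (it
   contains w a u for a suitable a). So every g in I_i is theta_i of a word in Sigma^* u Sigma^*
   of rank at most rk(w) for every such w, which gives (1) and (2).
   For (3), if theta_i(x) = 0 but theta_j(x) <> 0, primeness gives words a, b with
   theta_j(u a x b u) <> 0; the support of u a x b u is nonempty, contained in supp(u) and misses i,
   contradicting v-minimality. *)
theory Submission
  imports Defs "HOL-Library.FuncSet"
begin

lemma act_Nil [simp]: "act delta q [] = q"
  by (simp add: act_def)

lemma act_Cons [simp]: "act delta q (a # w) = act delta (delta q a) w"
  by (simp add: act_def)

lemma act_append: "act delta q (xs @ ys) = act delta (act delta q xs) ys"
  by (induction xs arbitrary: q) auto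

lemma act_less:
  "is_automaton n Sig delta \<Longrightarrow> w \<in> lists Sig \<Longrightarrow> q < n \<Longrightarrow> act delta q w < n"
  by (induction w arbitrary: q) (auto simp: is_automaton_def)

lemma rk_infix_le:
  assumes aut: "is_automaton n Sig delta" and x: "x \<in> lists Sig"
  shows "rk n delta (x @ w @ y) \<le> rk n delta w"
proof -
  have "(\<lambda>q. act delta q (x @ w @ y)) ` {..<n}
        = (\<lambda>p. act delta p y) ` (\<lambda>p. act delta p w) ` (\<lambda>q. act delta q x) ` {..<n}"
    by (auto simp: act_append image_image)
  then have "rk n delta (x @ w @ y) \<le> card ((\<lambda>p. act delta p w) ` (\<lambda>q. act delta q x) ` {..<n})"
    unfolding rk_def by (simp add: card_image_le)
  also have "\<dots> \<le> rk n delta w"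
    unfolding rk_def using act_less[OF aut x] by (intro card_mono image_mono) auto
  finally show ?thesis .
qed

lemma factor_langI: "x \<in> lists Sig \<Longrightarrow> y \<in> lists Sig \<Longrightarrow> x @ u @ y \<in> factor_lang Sig u"
  unfolding factor_lang_def by blast

lemma factor_lang_subset_lists: "u \<in> lists Sig \<Longrightarrow> factor_lang Sig u \<subseteq> lists Sig"
  unfolding factor_lang_def by auto

lemma rho_carrier [simp]: "rho n delta w \<in> carrier_mat (n - 1) (n - 1)"
  by (simp add: rho_def)

lemma rho_Nil: "rho n delta [] = 1\<^sub>m (n - 1)"
  by (rule eq_matI) (auto simp: rho_def)

lemma rho_append:
  assumes aut: "is_automaton n Sig delta" and xs: "xs \<in> lists Sig"
  shows "rho n delta (xs @ ys) = rho n delta xs * rho n delta ys"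
proof (rule eq_matI)
  fix j m assume "j < dim_row (rho n delta xs * rho n delta ys)"
    and "m < dim_col (rho n delta xs * rho n delta ys)"
  then have j: "j < n - 1" and m: "m < n - 1" by (auto simp: rho_def)
  define f where "f l = (if act delta l ys = m then 1 else 0)
    - (if act delta (n - 1) ys = m then 1 else (0::complex))" for l
  \<comment> \<open>f vanishes at the omitted basis index n - 1, so a state p < n contributes exactly f p\<close>
  have pick: "(\<Sum>l = 0..<n - 1. (if p = l then 1 else 0) * f l) = f p" if "p < n" for p
  proof -
    have "(\<Sum>l = 0..<n - 1. (if p = l then 1 else 0) * f l) = (if p < n - 1 then f p else 0)"
      by (simp add: if_distrib[of "\<lambda>c. c * _"] sum.delta cong: if_cong)
    also have "\<dots> = f p" using that by (cases "p = n - 1") (auto simp: f_def)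
    finally show ?thesis .
  qed
  define p where "p = act delta j xs"
  define p' where "p' = act delta (n - 1) xs"
  have "p < n" "p' < n" using act_less[OF aut xs] j by (auto simp: p_def p'_def)
  have "(rho n delta xs * rho n delta ys) $$ (j, m)
      = (\<Sum>l = 0..<n - 1. ((if p = l then 1 else 0) - (if p' = l then 1 else 0)) * f l)"
    using j m by (simp add: rho_def scalar_prod_def p_def p'_def f_def)
  also have "\<dots> = (\<Sum>l = 0..<n - 1. (if p = l then 1 else 0) * f l)
      - (\<Sum>l = 0..<n - 1. (if p' = l then 1 else 0) * f l)"
    by (simp add: left_diff_distrib sum_subtractf)
  also have "\<dots> = f p - f p'" using pick \<open>p < n\<close> \<open>p' < n\<close> by simp
  also have "\<dots> = rho n delta (xs @ ys) $$ (j, m)"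
    using j m by (simp add: rho_def f_def p_def p'_def act_append)
  finally show "rho n delta (xs @ ys) $$ (j, m) = (rho n delta xs * rho n delta ys) $$ (j, m)" ..
qed (auto simp: rho_def)

lemma rho_rk_one:
  assumes "rk n delta s = 1"
  shows "rho n delta s = 0\<^sub>m (n - 1) (n - 1)"
proof -
  from assms obtain c where c: "(\<lambda>q. act delta q s) ` {..<n} = {c}"
    unfolding rk_def by (auto simp: card_Suc_eq)
  then have "n \<ge> 1" by (cases n) auto
  moreover have "act delta q s = c" if "q < n" for q using c that by auto
  ultimately show ?thesis by (intro eq_matI) (auto simp: rho_def)
qed

lemma finite_rho_image:
  assumes aut: "is_automaton n Sig delta"
  shows "finite (rho n delta ` lists Sig)"
proof -
  define M where "M f = mat (n - 1) (n - 1) (\<lambda>(j, m).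
    (if f j = m then 1 else 0) - (if f (n - 1) = m then 1 else (0::complex)))" for f :: "nat \<Rightarrow> nat"
  have "rho n delta w = M (restrict (\<lambda>q. act delta q w) {..<n})" for w
    by (rule eq_matI) (auto simp: rho_def M_def)
  moreover have "restrict (\<lambda>q. act delta q w) {..<n} \<in> {..<n} \<rightarrow>\<^sub>E {..<n}" if "w \<in> lists Sig" for w
    using act_less[OF aut that] by auto
  ultimately have "rho n delta ` lists Sig \<subseteq> M ` ({..<n} \<rightarrow>\<^sub>E {..<n})" by blast
  then show ?thesis by (rule finite_subset) (simp add: finite_PiE)
qed

section \<open>Prime monoids of matrices\<close>

lemma mat_prime:
  fixes g h :: "'a :: idom mat"
  assumes g: "g \<in> carrier_mat m m" and h: "h \<in> carrier_mat m m"
    and gMh: "\<And>M. M \<in> carrier_mat m m \<Longrightarrow> g * M * h = 0\<^sub>m m m"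
  shows "g = 0\<^sub>m m m \<or> h = 0\<^sub>m m m"
proof (rule ccontr)
  have nonzero_entry: "\<exists>a<m. \<exists>b<m. A $$ (a, b) \<noteq> 0"
    if "A \<in> carrier_mat m m" "A \<noteq> 0\<^sub>m m m" for A :: "'a mat"
    using that by (auto intro!: eq_matI)
  assume "\<not> ?thesis"
  then obtain a b c e where ab: "a < m" "b < m" "g $$ (a, b) \<noteq> 0"
    and ce: "c < m" "e < m" "h $$ (c, e) \<noteq> 0"
    using nonzero_entry[OF g] nonzero_entry[OF h] by blast
  define M where "M = mat m m (\<lambda>(r, s). if r = b \<and> s = c then 1 else (0::'a))"
  have M: "M \<in> carrier_mat m m" by (simp add: M_def)
  have gM: "(g * M) $$ (a, r) = (if r = c then g $$ (a, b) else 0)" if "r < m" for r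
  proof -
    have "(g * M) $$ (a, r) = (\<Sum>s = 0..<m. g $$ (a, s) * M $$ (s, r))"
      using g ab that by (simp add: M_def scalar_prod_def)
    also have "\<dots> = (\<Sum>s = 0..<m. if s = b then (if r = c then g $$ (a, b) else 0) else 0)"
      using that by (intro sum.cong) (auto simp: M_def)
    finally show ?thesis using ab by (simp add: sum.delta)
  qed
  have "(g * M * h) $$ (a, e) = (\<Sum>r = 0..<m. (g * M) $$ (a, r) * h $$ (r, e))"
    using g h M ab ce by (simp del: assoc_mult_mat add: scalar_prod_def)
  also have "\<dots> = (\<Sum>r = 0..<m. if r = c then g $$ (a, b) * h $$ (c, e) else 0)"
    by (intro sum.cong) (auto simp: gM)
  also have "\<dots> = g $$ (a, b) * h $$ (c, e)" using ce by (simp add: sum.delta)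
  finally have "(g * M * h) $$ (a, e) \<noteq> 0" using ab ce by simp
  with gMh[OF M] ab ce show False by simp
qed


lemma monoid_idealD:
  assumes "monoid_ideal S J"
  shows "J \<subseteq> S" "J \<noteq> {}"
    and "\<And>s t x. s \<in> S \<Longrightarrow> t \<in> S \<Longrightarrow> x \<in> J \<Longrightarrow> s * x * t \<in> J"
  using assms unfolding monoid_ideal_def by auto

lemma zero_minimal_idealD:
  assumes "zero_minimal_ideal S z J"
  shows "monoid_ideal S J" "\<exists>x\<in>J. x \<noteq> z"
    and "\<And>J'. monoid_ideal S J' \<Longrightarrow> J' \<subseteq> J \<Longrightarrow> J' = {z} \<or> J' = J"
  using assms unfolding zero_minimal_ideal_def by auto

locale mat_monoid =
  fixes m :: nat and S :: "complex mat set"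
  assumes carrier: "S \<subseteq> carrier_mat m m"
    and one_mem: "1\<^sub>m m \<in> S"
    and zero_mem: "0\<^sub>m m m \<in> S"
    and mult_mem: "x \<in> S \<Longrightarrow> y \<in> S \<Longrightarrow> x * y \<in> S"
begin

lemma ideal_zero_mem:
  assumes "monoid_ideal S J"
  shows "0\<^sub>m m m \<in> J"
proof -
  from monoid_idealD[OF assms] obtain x where x: "x \<in> J" "x \<in> S" by blast
  then have "0\<^sub>m m m * x * 0\<^sub>m m m \<in> J" using monoid_idealD(3)[OF assms] zero_mem by blast
  with x carrier show ?thesis by auto
qed

lemma ideal_Int: "monoid_ideal S J \<Longrightarrow> monoid_ideal S T \<Longrightarrow> monoid_ideal S (J \<inter> T)"
  using ideal_zero_mem unfolding monoid_ideal_def by blast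

lemma zero_minimal_ideal_exists:
  assumes "finite S" and "m > 0"
  shows "\<exists>J. zero_minimal_ideal S (0\<^sub>m m m) J"
proof -
  let ?P = "\<lambda>J. monoid_ideal S J \<and> J \<noteq> {0\<^sub>m m m}"
  have "1\<^sub>m m \<noteq> (0\<^sub>m m m :: complex mat)"
    using \<open>m > 0\<close> by (metis index_one_mat(1) index_zero_mat(1) zero_neq_one)
  then have "?P S" using one_mem mult_mem carrier unfolding monoid_ideal_def by auto
  then obtain J where J: "?P J" and least: "\<And>J'. ?P J' \<Longrightarrow> card J \<le> card J'"
    using ex_has_least_nat[of ?P S card] by blast
  have "finite J" using J \<open>finite S\<close> unfolding monoid_ideal_def by (auto intro: finite_subset)
  have "J' = J" if "monoid_ideal S J'" "J' \<subseteq> J" "J' \<noteq> {0\<^sub>m m m}" for J'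
    using least[of J'] that \<open>finite J\<close> by (metis card_mono card_subset_eq le_antisym)
  with J ideal_zero_mem show ?thesis unfolding zero_minimal_ideal_def by blast
qed

end

locale prime_mat_monoid = mat_monoid +
  assumes prime: "g \<in> S \<Longrightarrow> h \<in> S \<Longrightarrow> g \<noteq> 0\<^sub>m m m \<Longrightarrow> h \<noteq> 0\<^sub>m m m
    \<Longrightarrow> \<exists>a\<in>S. g * a * h \<noteq> 0\<^sub>m m m"
begin

lemma zero_minimal_ideal_subset:
  assumes J: "zero_minimal_ideal S (0\<^sub>m m m) J" and T: "monoid_ideal S T"
    and y: "y \<in> T" "y \<noteq> 0\<^sub>m m m"
  shows "J \<subseteq> T"
proof -
  have J_ideal: "monoid_ideal S J" using zero_minimal_idealD(1)[OF J] .
  obtain x where x: "x \<in> J" "x \<noteq> 0\<^sub>m m m" using zero_minimal_idealD(2)[OF J] by blast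
  have xy: "x \<in> S" "y \<in> S"
    using x y monoid_idealD(1)[OF J_ideal] monoid_idealD(1)[OF T] by auto
  then obtain a where a: "a \<in> S" "x * a * y \<noteq> 0\<^sub>m m m" using prime x y by blast
  have xc: "x \<in> carrier_mat m m" and yc: "y \<in> carrier_mat m m" and ac: "a \<in> carrier_mat m m"
    using xy a carrier by auto
  have "1\<^sub>m m * x * (a * y) \<in> J"
    by (rule monoid_idealD(3)[OF J_ideal one_mem mult_mem[OF a(1) xy(2)] x(1)])
  moreover have "1\<^sub>m m * x * (a * y) = x * a * y"
    using xc yc ac by (metis assoc_mult_mat left_mult_one_mat)
  moreover have "(x * a) * y * 1\<^sub>m m \<in> T"
    by (rule monoid_idealD(3)[OF T mult_mem[OF xy(1) a(1)] one_mem y(1)])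
  moreover have "(x * a) * y * 1\<^sub>m m = x * a * y"
    using xc yc ac by (metis mult_carrier_mat right_mult_one_mat)
  ultimately have "x * a * y \<in> J \<inter> T" by simp
  then have "J \<inter> T = J"
    using zero_minimal_idealD(3)[OF J ideal_Int[OF J_ideal T]] a(2) by blast
  then show ?thesis by blast
qed

lemma zero_minimal_ideal_unique:
  assumes J1: "zero_minimal_ideal S (0\<^sub>m m m) J1" and J2: "zero_minimal_ideal S (0\<^sub>m m m) J2"
  shows "J1 = J2"
  using zero_minimal_ideal_subset[OF J1 zero_minimal_idealD(1)[OF J2]]
    zero_minimal_ideal_subset[OF J2 zero_minimal_idealD(1)[OF J1]]
    zero_minimal_idealD(2)[OF J1] zero_minimal_idealD(2)[OF J2]
  by blast

end

locale sync_wedderburn =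
  fixes n :: nat and Sig :: "'a set" and delta :: "nat \<Rightarrow> 'a \<Rightarrow> nat"
    and k :: nat and d :: "nat \<Rightarrow> nat" and psi :: "complex mat \<Rightarrow> nat \<Rightarrow> complex mat"
  assumes aut: "is_automaton n Sig delta"
    and sync: "synchronizing n Sig delta"
    and wed: "wedderburn (gen_alg n Sig delta) (n - 1) k d psi"
begin

abbreviation "\<theta> \<equiv> theta n delta psi"
abbreviation "RR \<equiv> gen_alg n Sig delta"
abbreviation "theta_monoid i \<equiv> \<theta> i ` lists Sig"
abbreviation "Ideal i \<equiv> Ideal_I n Sig delta d psi i"

lemma d_pos: "i < k \<Longrightarrow> d i > 0"
  using wed by (simp add: wedderburn_def)

lemma psi_carrier: "x \<in> RR \<Longrightarrow> i < k \<Longrightarrow> psi x i \<in> carrier_mat (d i) (d i)"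
  using wed by (simp add: wedderburn_def)

lemma psi_add: "x \<in> RR \<Longrightarrow> y \<in> RR \<Longrightarrow> i < k \<Longrightarrow> psi (x + y) i = psi x i + psi y i"
  using wed by (simp add: wedderburn_def)

lemma psi_smult: "x \<in> RR \<Longrightarrow> i < k \<Longrightarrow> psi (c \<cdot>\<^sub>m x) i = c \<cdot>\<^sub>m psi x i"
  using wed by (simp add: wedderburn_def)

lemma psi_mult: "x \<in> RR \<Longrightarrow> y \<in> RR \<Longrightarrow> i < k \<Longrightarrow> psi (x * y) i = psi x i * psi y i"
  using wed by (simp add: wedderburn_def)

lemma psi_one: "i < k \<Longrightarrow> psi (1\<^sub>m (n - 1)) i = 1\<^sub>m (d i)"
  using wed by (simp add: wedderburn_def)

lemma psi_surj:
  "(\<And>i. i < k \<Longrightarrow> g i \<in> carrier_mat (d i) (d i)) \<Longrightarrow> \<exists>x\<in>RR. \<forall>i<k. psi x i = g i"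
  using wed by (simp add: wedderburn_def)

lemma psi_zero:
  assumes "i < k"
  shows "psi (0\<^sub>m (n - 1) (n - 1)) i = 0\<^sub>m (d i) (d i)"
proof -
  have z: "0\<^sub>m (n - 1) (n - 1) \<in> RR" by (rule gen_alg.zero)
  have "psi (0\<^sub>m (n - 1) (n - 1)) i = psi (0 \<cdot>\<^sub>m 0\<^sub>m (n - 1) (n - 1)) i" by simp
  also have "\<dots> = 0 \<cdot>\<^sub>m psi (0\<^sub>m (n - 1) (n - 1)) i" using psi_smult[OF z assms] .
  also have "\<dots> = 0\<^sub>m (d i) (d i)" using psi_carrier[OF z assms] by (intro eq_matI) auto
  finally show ?thesis .
qed

lemma theta_carrier [simp]: "w \<in> lists Sig \<Longrightarrow> i < k \<Longrightarrow> \<theta> i w \<in> carrier_mat (d i) (d i)"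
  unfolding theta_def by (rule psi_carrier) (auto intro: gen_alg.gen)

lemma theta_Nil: "i < k \<Longrightarrow> \<theta> i [] = 1\<^sub>m (d i)"
  unfolding theta_def rho_Nil by (rule psi_one)

lemma theta_append:
  "xs \<in> lists Sig \<Longrightarrow> ys \<in> lists Sig \<Longrightarrow> i < k \<Longrightarrow> \<theta> i (xs @ ys) = \<theta> i xs * \<theta> i ys"
  unfolding theta_def rho_append[OF aut] by (rule psi_mult) (auto intro: gen_alg.gen)

lemma theta_append3:
  "p \<in> lists Sig \<Longrightarrow> q \<in> lists Sig \<Longrightarrow> r \<in> lists Sig \<Longrightarrow> i < k \<Longrightarrow>
    \<theta> i p * \<theta> i q * \<theta> i r = \<theta> i (p @ q @ r)"
  by (simp add: theta_append assoc_mult_mat[OF theta_carrier theta_carrier theta_carrier])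

lemma theta_rk_one: "rk n delta s = 1 \<Longrightarrow> i < k \<Longrightarrow> \<theta> i s = 0\<^sub>m (d i) (d i)"
  unfolding theta_def by (simp only: rho_rk_one psi_zero)

lemma theta_infix_zero:
  assumes "p \<in> lists Sig" "q \<in> lists Sig" "r \<in> lists Sig" "i < k" "\<theta> i q = 0\<^sub>m (d i) (d i)"
  shows "\<theta> i (p @ q @ r) = 0\<^sub>m (d i) (d i)"
  using theta_append3[OF assms(1-4)] theta_carrier[OF assms(1,4)] theta_carrier[OF assms(3,4)]
    assms(5) by simp

lemma supp_infix_subset:
  "p \<in> lists Sig \<Longrightarrow> q \<in> lists Sig \<Longrightarrow> r \<in> lists Sig \<Longrightarrow>
    supp n delta k d psi (p @ q @ r) \<subseteq> supp n delta k d psi q"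
  unfolding supp_def using theta_infix_zero by blast

lemma psi_annihilated:
  assumes i: "i < k" and x: "x \<in> RR"
    and G: "G \<in> carrier_mat (d i) (d i)" and N: "N \<in> carrier_mat (d i) (d i)"
    and ann: "\<And>a. a \<in> lists Sig \<Longrightarrow> G * \<theta> i a * N = 0\<^sub>m (d i) (d i)"
  shows "G * psi x i * N = 0\<^sub>m (d i) (d i)"
  using x G N ann
proof (induction x arbitrary: G N rule: gen_alg.induct)
  case (gen w)
  then show ?case by (simp add: theta_def)
next
  case zero
  then show ?case using psi_zero[OF i] by simp
next
  case (add x y)
  have "psi x i \<in> carrier_mat (d i) (d i)" "psi y i \<in> carrier_mat (d i) (d i)"
    using add.hyps i by (auto intro: psi_carrier)
  with add show ?case
    using i by (simp add: psi_add mult_add_distrib_mat add_mult_distrib_mat[of _ "d i" "d i"])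
next
  case (smult x c)
  have "psi x i \<in> carrier_mat (d i) (d i)" using smult.hyps i by (auto intro: psi_carrier)
  with smult show ?case
    using i by (simp add: psi_smult mult_smult_distrib mult_smult_assoc_mat[of _ "d i" "d i"])
next
  case (mult x y)
  \<comment> \<open>the hypotheses for y and x are used with G * theta a resp. psi y * N in place of G resp. N\<close>
  have x: "psi x i \<in> carrier_mat (d i) (d i)" and y: "psi y i \<in> carrier_mat (d i) (d i)"
    using mult.hyps i by (auto intro: psi_carrier)
  have G: "G \<in> carrier_mat (d i) (d i)" and N: "N \<in> carrier_mat (d i) (d i)"
    using mult.prems(1,2) .
  have "G * \<theta> i a * (psi y i * N) = 0\<^sub>m (d i) (d i)" if a: "a \<in> lists Sig" for a
  proof -
    have Ga: "G * \<theta> i a \<in> carrier_mat (d i) (d i)" using G a i by simp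
    have "G * \<theta> i a * \<theta> i b * N = 0\<^sub>m (d i) (d i)" if b: "b \<in> lists Sig" for b
      using mult.prems(3)[of "a @ b"] a b i
      by (simp add: theta_append assoc_mult_mat[OF G theta_carrier[OF a i] theta_carrier[OF b i]])
    then have "G * \<theta> i a * psi y i * N = 0\<^sub>m (d i) (d i)"
      using mult.IH(2)[OF Ga N] by blast
    then show ?thesis by (simp add: assoc_mult_mat[OF Ga y N])
  qed
  then have "G * psi x i * (psi y i * N) = 0\<^sub>m (d i) (d i)"
    using mult.IH(1)[OF G mult_carrier_mat[OF y N]] by blast
  then show ?case
    using i mult.hyps
    by (simp add: psi_mult assoc_mult_mat[OF G x y] assoc_mult_mat[OF x y N]
        assoc_mult_mat[OF G mult_carrier_mat[OF x y] N] assoc_mult_mat[OF G x mult_carrier_mat[OF y N]])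
qed

lemma theta_prime:
  assumes i: "i < k" and g: "g \<in> carrier_mat (d i) (d i)" and h: "h \<in> carrier_mat (d i) (d i)"
    and "g \<noteq> 0\<^sub>m (d i) (d i)" and "h \<noteq> 0\<^sub>m (d i) (d i)"
  shows "\<exists>a\<in>lists Sig. g * \<theta> i a * h \<noteq> 0\<^sub>m (d i) (d i)"
proof (rule ccontr)
  assume "\<not> ?thesis"
  then have "g * psi x i * h = 0\<^sub>m (d i) (d i)" if "x \<in> RR" for x
    using psi_annihilated[OF i that g h] by blast
  moreover have "\<exists>x\<in>RR. psi x i = M" if "M \<in> carrier_mat (d i) (d i)" for M
  proof -
    have "\<exists>x\<in>RR. \<forall>j<k. psi x j = (if j = i then M else 0\<^sub>m (d j) (d j))"
      using that by (intro psi_surj) auto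
    then obtain x where "x \<in> RR" "\<forall>j<k. psi x j = (if j = i then M else 0\<^sub>m (d j) (d j))"
      by blast
    then show ?thesis using i by (intro bexI[where x = x]) auto
  qed
  ultimately have "g * M * h = 0\<^sub>m (d i) (d i)" if "M \<in> carrier_mat (d i) (d i)" for M
    using that by blast
  with mat_prime[OF g h] assms show False by blast
qed

lemma theta_prime_word:
  assumes "i < k" "p \<in> lists Sig" "q \<in> lists Sig"
    and "\<theta> i p \<noteq> 0\<^sub>m (d i) (d i)" "\<theta> i q \<noteq> 0\<^sub>m (d i) (d i)"
  shows "\<exists>a\<in>lists Sig. \<theta> i (p @ a @ q) \<noteq> 0\<^sub>m (d i) (d i)"
proof -
  obtain a where "a \<in> lists Sig" "\<theta> i p * \<theta> i a * \<theta> i q \<noteq> 0\<^sub>m (d i) (d i)"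
    using theta_prime[OF assms(1) theta_carrier[OF assms(2,1)] theta_carrier[OF assms(3,1)]]
      assms(4,5) by blast
  with theta_append3[OF assms(2) _ assms(3,1)] show ?thesis by auto
qed

lemma sync_word_theta_zero:
  obtains s where "s \<in> lists Sig" "\<And>i. i < k \<Longrightarrow> \<theta> i s = 0\<^sub>m (d i) (d i)"
proof -
  from sync obtain s where "s \<in> lists Sig" "rk n delta s = 1" unfolding synchronizing_def by blast
  then show thesis by (intro that[of s]) (simp_all add: theta_rk_one)
qed

lemma prime_mat_monoid_theta:
  assumes i: "i < k"
  shows "prime_mat_monoid (d i) (theta_monoid i)"
proof (intro prime_mat_monoid.intro mat_monoid.intro prime_mat_monoid_axioms.intro)
  show "theta_monoid i \<subseteq> carrier_mat (d i) (d i)"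
    by (rule image_subsetI) (rule theta_carrier[OF _ i])
  show "1\<^sub>m (d i) \<in> theta_monoid i"
    by (rule image_eqI[where x = "[]"]) (simp_all add: theta_Nil[OF i])
  obtain s where s: "s \<in> lists Sig" "\<And>j. j < k \<Longrightarrow> \<theta> j s = 0\<^sub>m (d j) (d j)"
    by (fact sync_word_theta_zero)
  show "0\<^sub>m (d i) (d i) \<in> theta_monoid i"
    by (rule image_eqI[where x = s]) (simp_all add: s i)
  show "x * y \<in> theta_monoid i" if "x \<in> theta_monoid i" "y \<in> theta_monoid i" for x y
  proof -
    from that obtain p q where "p \<in> lists Sig" "q \<in> lists Sig" "x = \<theta> i p" "y = \<theta> i q"
      by blast
    then show ?thesis using i by (intro image_eqI[where x = "p @ q"]) (simp_all add: theta_append)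
  qed
  show "\<exists>a\<in>theta_monoid i. g * a * h \<noteq> 0\<^sub>m (d i) (d i)"
    if gh: "g \<in> theta_monoid i" "h \<in> theta_monoid i"
      and nonzero: "g \<noteq> 0\<^sub>m (d i) (d i)" "h \<noteq> 0\<^sub>m (d i) (d i)" for g h
  proof -
    from gh obtain p q where "p \<in> lists Sig" "q \<in> lists Sig" "g = \<theta> i p" "h = \<theta> i q"
      by blast
    then obtain a where "a \<in> lists Sig" "g * \<theta> i a * h \<noteq> 0\<^sub>m (d i) (d i)"
      using theta_prime[OF i _ _ nonzero] i by auto
    then show ?thesis by (intro bexI[where x = "\<theta> i a"]) simp_all
  qed
qed

lemma finite_theta_monoid: "finite (theta_monoid i)"
proof -
  have "theta_monoid i = (\<lambda>M. psi M i) ` rho n delta ` lists Sig"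
    by (auto simp: theta_def image_image)
  then show ?thesis using finite_rho_image[OF aut] by simp
qed

lemma Ideal_zero_minimal:
  assumes i: "i < k"
  shows "zero_minimal_ideal (theta_monoid i) (0\<^sub>m (d i) (d i)) (Ideal i)"
proof -
  interpret prime_mat_monoid "d i" "theta_monoid i" using prime_mat_monoid_theta[OF i] .
  obtain J where J: "zero_minimal_ideal (theta_monoid i) (0\<^sub>m (d i) (d i)) J"
    using zero_minimal_ideal_exists finite_theta_monoid d_pos[OF i] by blast
  have "Ideal i = J"
    unfolding Ideal_I_def
  proof (rule the_equality)
    show "zero_minimal_ideal (theta_monoid i) (0\<^sub>m (d i) (d i)) J" by (fact J)
    show "J' = J" if "zero_minimal_ideal (theta_monoid i) (0\<^sub>m (d i) (d i)) J'" for J'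
      using zero_minimal_ideal_unique[OF that J] .
  qed
  with J show ?thesis by simp
qed

lemma Ideal_subset_theta_monoid: "i < k \<Longrightarrow> Ideal i \<subseteq> theta_monoid i"
  using monoid_idealD(1)[OF zero_minimal_idealD(1)[OF Ideal_zero_minimal]] .

lemma Ideal_nonzero_word:
  assumes "i < k"
  obtains w where "w \<in> lists Sig" "\<theta> i w \<in> Ideal i" "\<theta> i w \<noteq> 0\<^sub>m (d i) (d i)"
  using zero_minimal_idealD(2)[OF Ideal_zero_minimal[OF assms]]
    Ideal_subset_theta_monoid[OF assms] by blast

lemma monoid_ideal_theta_image:
  assumes i: "i < k" and W: "W \<subseteq> lists Sig" "W \<noteq> {}"
    and closed: "\<And>p z r. p \<in> lists Sig \<Longrightarrow> z \<in> W \<Longrightarrow> r \<in> lists Sig \<Longrightarrow> p @ z @ r \<in> W"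
  shows "monoid_ideal (theta_monoid i) (\<theta> i ` W)"
  unfolding monoid_ideal_def
proof (intro conjI ballI)
  show "\<theta> i ` W \<subseteq> theta_monoid i" "\<theta> i ` W \<noteq> {}" using W by auto
  fix s t x assume "s \<in> theta_monoid i" "t \<in> theta_monoid i" "x \<in> \<theta> i ` W"
  then obtain p r z where prz: "p \<in> lists Sig" "r \<in> lists Sig" "z \<in> W"
    and "s = \<theta> i p" "t = \<theta> i r" "x = \<theta> i z" by blast
  moreover have "z \<in> lists Sig" using W(1) prz(3) by blast
  ultimately have "s * x * t = \<theta> i (p @ z @ r)"
    using theta_append3[OF prz(1) _ prz(2) i] by simp
  with closed[OF prz(1,3,2)] show "s * x * t \<in> \<theta> i ` W" by blast
qed

lemma Ideal_subset_factor_lang_rk: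
  assumes i: "i < k" and u: "u \<in> lists Sig" "\<theta> i u \<noteq> 0\<^sub>m (d i) (d i)"
    and w: "w \<in> lists Sig" "\<theta> i w \<in> Ideal i" "\<theta> i w \<noteq> 0\<^sub>m (d i) (d i)"
  shows "Ideal i \<subseteq> \<theta> i ` {z \<in> factor_lang Sig u. rk n delta z \<le> rk n delta w}"
proof -
  interpret prime_mat_monoid "d i" "theta_monoid i" using prime_mat_monoid_theta[OF i] .
  let ?W = "{z \<in> factor_lang Sig u. rk n delta z \<le> rk n delta w}"
  obtain a where a: "a \<in> lists Sig" "\<theta> i (w @ a @ u) \<noteq> 0\<^sub>m (d i) (d i)"
    using theta_prime_word[OF i w(1) u(1) w(3) u(2)] by blast
  have "w @ a @ u \<in> ?W"
    using rk_infix_le[OF aut, of "[]" w "a @ u"] factor_langI[of "w @ a" Sig "[]" u] w(1) a(1)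
    by simp
  moreover have "?W \<subseteq> lists Sig" using factor_lang_subset_lists[OF u(1)] by blast
  moreover have "p @ z @ r \<in> ?W" if p: "p \<in> lists Sig" and z: "z \<in> ?W" and r: "r \<in> lists Sig"
    for p z r
  proof -
    obtain x y where "x \<in> lists Sig" "y \<in> lists Sig" "z = x @ u @ y"
      using z unfolding factor_lang_def by blast
    then have "p @ z @ r \<in> factor_lang Sig u"
      using p r factor_langI[of "p @ x" Sig "y @ r" u] by simp
    with rk_infix_le[OF aut p] z show ?thesis by (auto intro: order_trans)
  qed
  ultimately have "monoid_ideal (theta_monoid i) (\<theta> i ` ?W)"
    by (intro monoid_ideal_theta_image[OF i]) auto
  with a \<open>w @ a @ u \<in> ?W\<close> show ?thesis
    by (intro zero_minimal_ideal_subset[OF Ideal_zero_minimal[OF i]]) auto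
qed

lemma u_representable:
  assumes i: "i < k" and u: "u \<in> lists Sig" "\<theta> i u \<noteq> 0\<^sub>m (d i) (d i)" and g: "g \<in> Ideal i"
  shows "\<exists>w. u_represents n Sig delta d psi u i g w"
proof -
  obtain w0 where "w0 \<in> lists Sig" "\<theta> i w0 \<in> Ideal i" "\<theta> i w0 \<noteq> 0\<^sub>m (d i) (d i)"
    using Ideal_nonzero_word[OF i] .
  with Ideal_subset_factor_lang_rk[OF i u] g obtain z where "z \<in> factor_lang Sig u" "\<theta> i z = g"
    by blast
  then obtain w where "w \<in> factor_lang Sig u" "\<theta> i w = g"
    and "\<forall>w'. w' \<in> factor_lang Sig u \<and> \<theta> i w' = g \<longrightarrow> rk n delta w \<le> rk n delta w'"
    using ex_has_least_nat[of "\<lambda>w. w \<in> factor_lang Sig u \<and> \<theta> i w = g" z "rk n delta"] by blast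
  then show ?thesis unfolding u_represents_def by blast
qed

lemma Rnk_I_eqI:
  assumes i: "i < k" and w: "w \<in> lists Sig" "\<theta> i w \<in> Ideal i - {0\<^sub>m (d i) (d i)}"
    and least: "\<And>w'. w' \<in> lists Sig \<Longrightarrow> \<theta> i w' \<in> Ideal i - {0\<^sub>m (d i) (d i)}
      \<Longrightarrow> rk n delta w \<le> rk n delta w'"
  shows "Rnk_I n Sig delta d psi i = rk n delta w"
proof -
  have Rnk_i_ge: "rk n delta w \<le> Rnk_i n Sig delta psi i g"
    if g: "g \<in> Ideal i - {0\<^sub>m (d i) (d i)}" for g
  proof -
    obtain w0 where "w0 \<in> lists Sig" "\<theta> i w0 = g" using g Ideal_subset_theta_monoid[OF i] by blast
    then obtain w' where "w' \<in> lists Sig" "\<theta> i w' = g" "rk n delta w' = Rnk_i n Sig delta psi i g"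
      using LeastI_ex[of "\<lambda>r. \<exists>w'\<in>lists Sig. \<theta> i w' = g \<and> rk n delta w' = r"]
      unfolding Rnk_i_def by blast
    with least[of w'] g show ?thesis by simp
  qed
  have "Rnk_i n Sig delta psi i (\<theta> i w) = rk n delta w"
    unfolding Rnk_i_def
  proof (rule Least_equality)
    show "\<exists>w'\<in>lists Sig. \<theta> i w' = \<theta> i w \<and> rk n delta w' = rk n delta w" using w(1) by blast
    show "rk n delta w \<le> r" if "\<exists>w'\<in>lists Sig. \<theta> i w' = \<theta> i w \<and> rk n delta w' = r" for r
    proof -
      from that obtain w' where "w' \<in> lists Sig" "\<theta> i w' = \<theta> i w" "rk n delta w' = r" by blast
      with least[of w'] w(2) show ?thesis by simp
    qed
  qed
  then show ?thesis
    unfolding Rnk_I_def using w Rnk_i_ge by (intro Least_equality) auto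
qed

lemma u_represents_rk_eq_Rnk_I:
  assumes i: "i < k" and u: "u \<in> lists Sig" "\<theta> i u \<noteq> 0\<^sub>m (d i) (d i)"
    and g: "g \<in> Ideal i - {0\<^sub>m (d i) (d i)}" and rep: "u_represents n Sig delta d psi u i g w"
  shows "rk n delta w = Rnk_I n Sig delta d psi i"
proof -
  have w: "w \<in> factor_lang Sig u" "\<theta> i w = g"
    and min: "\<And>w'. w' \<in> factor_lang Sig u \<Longrightarrow> \<theta> i w' = g \<Longrightarrow> rk n delta w \<le> rk n delta w'"
    using rep g unfolding u_represents_def by auto
  have "rk n delta w \<le> rk n delta w'"
    if w': "w' \<in> lists Sig" "\<theta> i w' \<in> Ideal i - {0\<^sub>m (d i) (d i)}" for w'
  proof -
    obtain z where "z \<in> factor_lang Sig u" "rk n delta z \<le> rk n delta w'" "\<theta> i z = g"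
      using Ideal_subset_factor_lang_rk[OF i u, of w'] w' g by blast
    with min have "rk n delta w \<le> rk n delta z" by blast
    then show ?thesis using \<open>rk n delta z \<le> rk n delta w'\<close> by (rule order_trans)
  qed
  moreover have "w \<in> lists Sig" using w(1) factor_lang_subset_lists[OF u(1)] by blast
  ultimately show ?thesis using Rnk_I_eqI[OF i _ _] w(2) g by simp
qed

lemma v_minimalD:
  assumes "v_minimal n Sig delta k d psi v u"
  shows "u \<in> factor_lang Sig v"
    and "\<And>z. z \<in> factor_lang Sig v \<Longrightarrow> supp n delta k d psi z \<noteq> {}
      \<Longrightarrow> supp n delta k d psi z \<subseteq> supp n delta k d psi u
      \<Longrightarrow> supp n delta k d psi z = supp n delta k d psi u"
  using assms unfolding v_minimal_def by (metis psubsetI)+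

lemma v_minimal_theta_zero:
  assumes v: "v \<in> lists Sig" and umin: "v_minimal n Sig delta k d psi v u"
    and x: "x \<in> lists Sig" and i: "i \<in> supp n delta k d psi u" "\<theta> i x = 0\<^sub>m (d i) (d i)"
    and j: "j \<in> supp n delta k d psi u"
  shows "\<theta> j x = 0\<^sub>m (d j) (d j)"
proof (rule ccontr)
  assume xj: "\<theta> j x \<noteq> 0\<^sub>m (d j) (d j)"
  obtain p q where pq: "p \<in> lists Sig" "q \<in> lists Sig" "u = p @ v @ q"
    using v_minimalD(1)[OF umin] unfolding factor_lang_def by blast
  have u: "u \<in> lists Sig" using pq v by simp
  have jk: "j < k" and uj: "\<theta> j u \<noteq> 0\<^sub>m (d j) (d j)" using j unfolding supp_def by auto
  obtain a where a: "a \<in> lists Sig" "\<theta> j (u @ a @ x) \<noteq> 0\<^sub>m (d j) (d j)"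
    using theta_prime_word[OF jk u x uj xj] by blast
  have "u @ a @ x \<in> lists Sig" using u a(1) x by simp
  from theta_prime_word[OF jk this u a(2) uj] obtain b
    where b: "b \<in> lists Sig" "\<theta> j ((u @ a @ x) @ b @ u) \<noteq> 0\<^sub>m (d j) (d j)" by blast
  define z where "z = u @ a @ x @ b @ u"
  have z_lists: "a @ x @ b @ u \<in> lists Sig" "u @ a \<in> lists Sig" "b @ u \<in> lists Sig"
    using u a(1) b(1) x by simp_all
  have z_v: "z \<in> factor_lang Sig v"
    using factor_langI[of p Sig "q @ a @ x @ b @ u" v] pq a(1) b(1) x u by (simp add: z_def)
  have j_z: "j \<in> supp n delta k d psi z"
    using b(2) jk by (simp add: supp_def z_def)
  have "supp n delta k d psi z \<subseteq> supp n delta k d psi u"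
    using supp_infix_subset[OF lists.Nil u z_lists(1)] by (simp add: z_def)
  moreover have "i \<notin> supp n delta k d psi z"
  proof -
    have "supp n delta k d psi z \<subseteq> supp n delta k d psi x"
      using supp_infix_subset[OF z_lists(2) x z_lists(3)] by (simp add: z_def)
    moreover have "i \<notin> supp n delta k d psi x" using i(2) by (simp add: supp_def)
    ultimately show ?thesis by blast
  qed
  moreover have "supp n delta k d psi z \<noteq> {}" using j_z by blast
  ultimately show False using v_minimalD(2)[OF umin z_v] i(1) by simp
qed

end

theorem mainTheorem5:
  fixes n :: nat and Sig :: "'a set" and delta :: "nat \<Rightarrow> 'a \<Rightarrow> nat"
    and k :: nat and d :: "nat \<Rightarrow> nat" and psi :: "complex mat \<Rightarrow> nat \<Rightarrow> complex mat"
    and v u :: "'a list" and i :: nat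
  assumes aut: "is_automaton n Sig delta"
    and sync: "synchronizing n Sig delta"
    and wed: "wedderburn (gen_alg n Sig delta) (n - 1) k d psi"
    and v: "v \<in> lists Sig"
    and umin: "v_minimal n Sig delta k d psi v u"
    and i: "i \<in> supp n delta k d psi u"
  shows "(\<forall>g \<in> Ideal_I n Sig delta d psi i. \<exists>w. u_represents n Sig delta d psi u i g w)
    \<and> (\<forall>g \<in> Ideal_I n Sig delta d psi i - {0\<^sub>m (d i) (d i)}. \<forall>w.
          u_represents n Sig delta d psi u i g w \<longrightarrow> rk n delta w = Rnk_I n Sig delta d psi i)
    \<and> (\<forall>x \<in> lists Sig. (\<exists>i' \<in> supp n delta k d psi u. theta n delta psi i' x = 0\<^sub>m (d i') (d i'))
          \<longrightarrow> (\<forall>j \<in> supp n delta k d psi u. theta n delta psi j x = 0\<^sub>m (d j) (d j)))"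
proof -
  interpret sync_wedderburn n Sig delta k d psi using aut sync wed by unfold_locales
  have u: "u \<in> lists Sig" using v_minimalD(1)[OF umin] factor_lang_subset_lists[OF v] by blast
  have ik: "i < k" and ui: "\<theta> i u \<noteq> 0\<^sub>m (d i) (d i)" using i unfolding supp_def by auto
  show ?thesis
  proof (intro conjI ballI allI impI)
    show "\<exists>w. u_represents n Sig delta d psi u i g w" if "g \<in> Ideal i" for g
      using u_representable[OF ik u ui that] .
    show "rk n delta w = Rnk_I n Sig delta d psi i"
      if "g \<in> Ideal i - {0\<^sub>m (d i) (d i)}" "u_represents n Sig delta d psi u i g w" for g w
      using u_represents_rk_eq_Rnk_I[OF ik u ui that] .
    show "\<theta> j x = 0\<^sub>m (d j) (d j)"
      if x: "x \<in> lists Sig" and "\<exists>i'\<in>supp n delta k d psi u. \<theta> i' x = 0\<^sub>m (d i') (d i')"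
        and j: "j \<in> supp n delta k d psi u" for x j
    proof -
      from that(2) obtain i' where "i' \<in> supp n delta k d psi u" "\<theta> i' x = 0\<^sub>m (d i') (d i')"
        by blast
      from v_minimal_theta_zero[OF v umin x this j] show ?thesis .
    qed
  qed
qed

end
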